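(* Consider $N\ge3$ cells on a ring, with interconnection matrix $M\in\mathbb{R}^{N\times N}$ the circulant matrix with $[M]_{i,i\pm1 \bmod N}=\tfrac12$ and all other entries $0$, so that its eigenvalues are $\lambda_k(M)=\cos\frac{2\pi k}{N}\in[-1,1]$, $k=0,\dots,N-1$. The mutual inactivation Notch–Delta model is $$\dot N_i=\beta_N-\gamma N_i-\frac{N_iv_{D_i}}{k_t}-\frac{N_iD_i}{k_c},\quad \dot D_i=\bar\beta_D+u_i-\gamma D_i-\frac{D_iv_{N_i}}{k_t}-\frac{N_iD_i}{k_c},\quad \dot R_i=\beta_R\frac{(N_iv_{D_i})^n}{k_{RS}+(N_iv_{D_i})^n}-\gamma_RR_i,$$ with $(v_{N_i},v_{D_i})$ the $i$th block of $(M\otimes I_2)w$, $w_i=(N_i,D_i)$, and all parameters $\beta_N,\bar\beta_D,\gamma,\gamma_R,k_t,k_c,\beta_R,k_{RS},n$ positive. Let $(\bar N^*,\bar D^*,\bar R^* )$ with $\bar N^*,\bar D^*>0$ be a spatially homogeneous steady state for $u\equiv0$ (so $\bar v_N^*=\bar N^*$, $\bar v_D^*=\bar D^*$), and define $$A=\begin{pmatrix}-\gamma-\frac{\bar v_D^*}{k_t}-\frac{\bar D^*}{k_c}&-\frac{\bar N^*}{k_c}&0\\-\frac{\bar D^*}{k_c}&-\gamma-\frac{\bar v_N^*}{k_t}-\frac{\bar N^*}{k_c}&0\\ b_1&0&-\gamma_R\end{pmatrix},\quad B_v=\begin{pmatrix}0&-\frac{\bar N^*}{k_t}\\-\frac{\bar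 D^*}{k_t}&0\\0&b_2\end{pmatrix},\quad G=\begin{pmatrix}1&0&0\\0&1&0\end{pmatrix},$$ where $b_1=\beta_Rnk_{RS}\frac{(\bar v_D^* )^n(\bar N^* )^{n-1}}{(k_{RS}+(\bar N^*\bar v_D^* )^n)^2}$ and $b_2=\frac{\bar N^*}{\bar v_D^*}b_1$. Then for every $k=0,\dots,N-1$, all eigenvalues of $A+\lambda_k(M)B_vG$ have negative real part; i.e. the linearization about the homogeneous steady state is asymptotically stable.
   Context: $\otimes$ denotes the Kronecker product. $N_i,D_i,R_i$ are concentrations of Notch, Delta and a reporter in cell $i$; $v_{N_i},v_{D_i}$ are the average Notch and Delta of the two neighbors of cell $i$. *)

theory Defs
  imports "Jordan_Normal_Form.Char_Poly"
begin

definition ring_eig :: "nat \<Rightarrow> nat \<Rightarrow> real" where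
  "ring_eig NN k = cos (2 * pi * real k / real NN)"

definition ring_M :: "nat \<Rightarrow> real mat" where
  "ring_M NN = mat NN NN (\<lambda>(i,j). if j = (i + 1) mod NN \<or> i = (j + 1) mod NN then 1/2 else 0)"

definition hom_steady_state ::
  "real \<Rightarrow> real \<Rightarrow> real \<Rightarrow> real \<Rightarrow> real \<Rightarrow> real \<Rightarrow> real \<Rightarrow> real \<Rightarrow> real \<Rightarrow>
   real \<Rightarrow> real \<Rightarrow> real \<Rightarrow> bool" where
  "hom_steady_state \<beta>N \<beta>D \<gamma> \<gamma>R kt kc \<beta>R kRS n Ns Ds Rs \<longleftrightarrow>
     \<beta>N - \<gamma> * Ns - Ns * Ds / kt - Ns * Ds / kc = 0 \<and>
     \<beta>D - \<gamma> * Ds - Ds * Ns / kt - Ns * Ds / kc = 0 \<and>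
     \<beta>R * (Ns * Ds) powr n / (kRS + (Ns * Ds) powr n) - \<gamma>R * Rs = 0"

definition nd_b1 :: "real \<Rightarrow> real \<Rightarrow> real \<Rightarrow> real \<Rightarrow> real \<Rightarrow> real" where
  "nd_b1 \<beta>R kRS n Ns Ds =
     \<beta>R * n * kRS * (Ds powr n * Ns powr (n - 1)) / (kRS + (Ns * Ds) powr n)\<^sup>2"

definition nd_b2 :: "real \<Rightarrow> real \<Rightarrow> real \<Rightarrow> real \<Rightarrow> real \<Rightarrow> real" where
  "nd_b2 \<beta>R kRS n Ns Ds = Ns / Ds * nd_b1 \<beta>R kRS n Ns Ds"

definition nd_A :: "real \<Rightarrow> real \<Rightarrow> real \<Rightarrow> real \<Rightarrow> real \<Rightarrow> real \<Rightarrow> real \<Rightarrow> real \<Rightarrow> real \<Rightarrow> real mat" where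
  "nd_A \<gamma> \<gamma>R kt kc \<beta>R kRS n Ns Ds = mat_of_rows_list 3
     [[- \<gamma> - Ds / kt - Ds / kc, - Ns / kc, 0],
      [- Ds / kc, - \<gamma> - Ns / kt - Ns / kc, 0],
      [nd_b1 \<beta>R kRS n Ns Ds, 0, - \<gamma>R]]"

definition nd_Bv :: "real \<Rightarrow> real \<Rightarrow> real \<Rightarrow> real \<Rightarrow> real \<Rightarrow> real \<Rightarrow> real mat" where
  "nd_Bv kt \<beta>R kRS n Ns Ds = mat_of_rows_list 2
     [[0, - Ns / kt],
      [- Ds / kt, 0],
      [0, nd_b2 \<beta>R kRS n Ns Ds]]"

definition nd_G :: "real mat" where
  "nd_G = mat_of_rows_list 3 [[1, 0, 0], [0, 1, 0]]"

end

theory Submission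
  imports Defs
begin

text \<open>The reporter R does not feed back into (N, D), so the linearization is block lower
  triangular: its spectrum is -\<gamma>R together with the spectrum of the 2x2 (N, D) block.
  That block has negative trace, and its determinant stays positive for every coupling
  weight |\<lambda>| \<le> 1, because the off-diagonal product N D (1/kc + \<lambda>/kt)^2 never exceeds
  N D (1/kc + 1/kt)^2 < (\<gamma> + D/kt + D/kc)(\<gamma> + N/kt + N/kc).  A 2x2 block with negative
  trace and positive determinant is stable.  Neither the steady-state equations nor the
  entries b1, b2 are needed.\<close>

lemma nd_linearization_eq:
  "nd_A \<gamma> \<gamma>R kt kc \<beta>R kRS n Ns Ds + c \<cdot>\<^sub>m (nd_Bv kt \<beta>R kRS n Ns Ds * nd_G)
   = mat_of_rows_list 3
     [[- \<gamma> - Ds / kt - Ds / kc, - Ns / kc - c * (Ns / kt), 0],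
      [- Ds / kc - c * (Ds / kt), - \<gamma> - Ns / kt - Ns / kc, 0],
      [nd_b1 \<beta>R kRS n Ns Ds, c * nd_b2 \<beta>R kRS n Ns Ds, - \<gamma>R]]"
  by (rule eq_matI)
    (auto simp: nd_A_def nd_Bv_def nd_G_def mat_of_rows_list_def times_mat_def
      scalar_prod_def eval_nat_numeral less_Suc_eq)

lemma eigen_equations_2_det_mult_eq_0:
  fixes a b c d \<mu> x y :: "'a :: comm_ring"
  assumes "a * x + b * y = \<mu> * x" "c * x + d * y = \<mu> * y"
  shows "((\<mu> - a) * (\<mu> - d) - b * c) * x = 0" "((\<mu> - a) * (\<mu> - d) - b * c) * y = 0"
proof -
  have "((\<mu> - a) * (\<mu> - d) - b * c) * x
      = (\<mu> - d) * (\<mu> * x - (a * x + b * y)) + b * (\<mu> * y - (c * x + d * y))"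
    by (simp add: algebra_simps)
  with assms show "((\<mu> - a) * (\<mu> - d) - b * c) * x = 0" by simp
  have "((\<mu> - a) * (\<mu> - d) - b * c) * y
      = (\<mu> - a) * (\<mu> * y - (c * x + d * y)) + c * (\<mu> * x - (a * x + b * y))"
    by (simp add: algebra_simps)
  with assms show "((\<mu> - a) * (\<mu> - d) - b * c) * y = 0" by simp
qed

lemma eigenvalue_block_lower_triangular_3:
  fixes a b c d e f g :: real and \<mu> :: complex
  assumes "eigenvalue (map_mat complex_of_real
             (mat_of_rows_list 3 [[a, b, 0], [c, d, 0], [e, f, g]])) \<mu>"
  shows "\<mu> = of_real g \<or> (\<mu> - of_real a) * (\<mu> - of_real d) - of_real b * of_real c = 0"
proof (rule disjCI)
  let ?M = "map_mat complex_of_real (mat_of_rows_list 3 [[a, b, 0], [c, d, 0], [e, f, g]])"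
  let ?det = "(\<mu> - of_real a) * (\<mu> - of_real d) - of_real b * of_real c"
  assume det: "?det \<noteq> 0"
  obtain v where v: "v \<in> carrier_vec 3" "v \<noteq> 0\<^sub>v 3" and eig: "?M *\<^sub>v v = \<mu> \<cdot>\<^sub>v v"
    using assms unfolding eigenvalue_def eigenvector_def
    by (auto simp: mat_of_rows_list_def eval_nat_numeral)
  have "(?M *\<^sub>v v) $ i = \<mu> * v $ i" if "i < 3" for i
    using eig v(1) that by (metis carrier_vecD index_smult_vec(1))
  from this[of 0] this[of 1] this[of 2] v(1)
  have rows: "of_real a * v$0 + of_real b * v$1 = \<mu> * v$0"
             "of_real c * v$0 + of_real d * v$1 = \<mu> * v$1"
             "of_real e * v$0 + of_real f * v$1 + of_real g * v$2 = \<mu> * v$2"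
    by (auto simp: mat_of_rows_list_def mult_mat_vec_def scalar_prod_def eval_nat_numeral)
  from eigen_equations_2_det_mult_eq_0[OF rows(1,2)] det
  have v01: "v$0 = 0" "v$1 = 0" by auto
  have "v$2 \<noteq> 0"
  proof
    assume "v$2 = 0"
    with v01 v(1) have "v = 0\<^sub>v 3"
      by (intro eq_vecI) (auto simp: eval_nat_numeral less_Suc_eq)
    with v(2) show False by simp
  qed
  moreover from rows(3) v01 have "of_real g * v$2 = \<mu> * v$2"
    by simp
  ultimately show "\<mu> = of_real g"
    by (metis mult_cancel_right)
qed

lemma Re_neg_if_trace_neg_det_pos:
  fixes a b c d :: real and \<mu> :: complex
  assumes trace: "a + d < 0" and det: "a * d - b * c > 0"
    and root: "(\<mu> - of_real a) * (\<mu> - of_real d) - of_real b * of_real c = 0"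
  shows "Re \<mu> < 0"
proof -
  let ?x = "Re \<mu>" and ?y = "Im \<mu>"
  have re: "?x * ?x - ?x * (a + d) + (a * d - b * c) = ?y * ?y"
    using arg_cong[OF root, of Re] by (simp add: algebra_simps)
  have im: "?y * (2 * ?x - (a + d)) = 0"
    using arg_cong[OF root, of Im] by (simp add: algebra_simps)
  show ?thesis
  proof (cases "?y = 0")
    case False
    with im trace show ?thesis by simp
  next
    case True
    show ?thesis
    proof (rule ccontr)
      assume "\<not> ?x < 0"
      then have "?x * (a + d) \<le> 0"
        using trace by (simp add: mult_nonneg_nonpos)
      moreover have "?x * ?x \<ge> 0" by simp
      moreover have "?y * ?y = 0" using True by simp
      ultimately show False using re det by linarith
    qed
  qed
qed

lemma nd_block_det_pos:
  fixes \<gamma> kt kc Ns Ds c :: real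
  assumes "\<gamma> > 0" "kt > 0" "kc > 0" "Ns > 0" "Ds > 0" "\<bar>c\<bar> \<le> 1"
  shows "(- \<gamma> - Ds / kt - Ds / kc) * (- \<gamma> - Ns / kt - Ns / kc)
         - (- Ns / kc - c * (Ns / kt)) * (- Ds / kc - c * (Ds / kt)) > 0"
proof -
  define p where "p = 1/kt + 1/kc"
  define q where "q = 1/kc + c/kt"
  have p: "p > 0" using assms unfolding p_def by (simp add: add_pos_pos)
  have "c \<le> 1" "-1 \<le> c" using assms(6) by auto
  then have "-(1/kt) \<le> c/kt" "c/kt \<le> 1/kt"
    using divide_right_mono \<open>kt > 0\<close> by fastforce+
  moreover have "1/kc > 0" using assms by simp
  ultimately have q: "\<bar>q\<bar> \<le> p"
    unfolding p_def q_def abs_le_iff by linarith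
  have "\<bar>q\<bar> * \<bar>q\<bar> \<le> p * p"
    by (rule mult_mono[OF q q]) (use p in auto)
  then have "q * q \<le> p * p" by simp
  then have "Ns * Ds * (q * q) \<le> Ns * Ds * (p * p)"
    using assms by simp
  moreover have "Ns * Ds * (p * p) < (\<gamma> + Ds * p) * (\<gamma> + Ns * p)"
  proof -
    have "0 < \<gamma> * (\<gamma> + Ds * p + Ns * p)"
      using assms p by (simp add: add_pos_pos)
    then show ?thesis by (simp add: algebra_simps)
  qed
  moreover have "(- \<gamma> - Ds / kt - Ds / kc) * (- \<gamma> - Ns / kt - Ns / kc)
         - (- Ns / kc - c * (Ns / kt)) * (- Ds / kc - c * (Ds / kt))
       = (\<gamma> + Ds * p) * (\<gamma> + Ns * p) - Ns * Ds * (q * q)"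
    unfolding p_def q_def by (simp add: algebra_simps)
  ultimately show ?thesis by linarith
qed

lemma nd_block_root_Re_neg:
  fixes \<gamma> kt kc Ns Ds c :: real and \<mu> :: complex
  assumes "\<gamma> > 0" "kt > 0" "kc > 0" "Ns > 0" "Ds > 0" "\<bar>c\<bar> \<le> 1"
    and root: "(\<mu> - of_real (- \<gamma> - Ds / kt - Ds / kc))
        * (\<mu> - of_real (- \<gamma> - Ns / kt - Ns / kc))
        - of_real (- Ns / kc - c * (Ns / kt)) * of_real (- Ds / kc - c * (Ds / kt)) = 0"
  shows "Re \<mu> < 0"
proof (rule Re_neg_if_trace_neg_det_pos[OF _ nd_block_det_pos root])
  have "Ds / kt > 0" "Ds / kc > 0" "Ns / kt > 0" "Ns / kc > 0"
    using assms by simp_all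
  then show "(- \<gamma> - Ds / kt - Ds / kc) + (- \<gamma> - Ns / kt - Ns / kc) < 0"
    using \<open>\<gamma> > 0\<close> by linarith
qed (use assms in auto)

theorem mainTheorem5:
  fixes NN :: nat and \<beta>N \<beta>D \<gamma> \<gamma>R kt kc \<beta>R kRS n Ns Ds Rs :: real
  assumes "NN \<ge> 3"
    and "\<beta>N > 0" "\<beta>D > 0" "\<gamma> > 0" "\<gamma>R > 0" "kt > 0" "kc > 0"
        "\<beta>R > 0" "kRS > 0" "n > 0"
    and "Ns > 0" "Ds > 0"
    and "hom_steady_state \<beta>N \<beta>D \<gamma> \<gamma>R kt kc \<beta>R kRS n Ns Ds Rs"
  shows "\<forall>k < NN. \<forall>\<mu> :: complex.
           eigenvalue (map_mat complex_of_real
             (nd_A \<gamma> \<gamma>R kt kc \<beta>R kRS n Ns Ds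
              + ring_eig NN k \<cdot>\<^sub>m (nd_Bv kt \<beta>R kRS n Ns Ds * nd_G))) \<mu>
           \<longrightarrow> Re \<mu> < 0"
proof (intro allI impI)
  fix k \<mu>
  define c where "c = ring_eig NN k"
  have c: "\<bar>c\<bar> \<le> 1" unfolding c_def ring_eig_def by (rule abs_cos_le_one)
  assume "eigenvalue (map_mat complex_of_real
             (nd_A \<gamma> \<gamma>R kt kc \<beta>R kRS n Ns Ds
              + ring_eig NN k \<cdot>\<^sub>m (nd_Bv kt \<beta>R kRS n Ns Ds * nd_G))) \<mu>"
  then have "eigenvalue (map_mat complex_of_real (mat_of_rows_list 3
     [[- \<gamma> - Ds / kt - Ds / kc, - Ns / kc - c * (Ns / kt), 0],
      [- Ds / kc - c * (Ds / kt), - \<gamma> - Ns / kt - Ns / kc, 0],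
      [nd_b1 \<beta>R kRS n Ns Ds, c * nd_b2 \<beta>R kRS n Ns Ds, - \<gamma>R]])) \<mu>"
    unfolding nd_linearization_eq c_def .
  from eigenvalue_block_lower_triangular_3[OF this] show "Re \<mu> < 0"
  proof
    assume "\<mu> = of_real (- \<gamma>R)"
    with \<open>\<gamma>R > 0\<close> show ?thesis by simp
  qed (rule nd_block_root_Re_neg, use assms c in auto)
qed

end
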